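(* Let $m,n\ge 0$ with $m+n\ge 1$. The Heisenberg Lie superalgebra $H(m,n)$ is capable if and only if $m=1$ and $n=0$.
   Context: All algebras are over a field $\mathbb{F}$ of characteristic $\neq 2,3$. $H(m,n)$ is the Lie superalgebra with even basis $x_1,\dots,x_{2m},z$, odd basis $y_1,\dots,y_n$, and nonzero brackets $[x_i,x_{m+i}]=z$ ($1\le i\le m$), $[y_j,y_j]=z$ ($1\le j\le n$). A Lie superalgebra $L$ is capable if $L\cong H/Z(H)$ for some Lie superalgebra $H$, where $Z(H)$ denotes the center. *)

theory Defs
  imports Main
begin

record ('f, 'a) lsa =
  lcarrier :: "'a set"
  leven :: "'a set"
  lodd :: "'a set"
  ladd :: "'a \<Rightarrow> 'a \<Rightarrow> 'a"
  lzero :: 'a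
  lneg :: "'a \<Rightarrow> 'a"
  lsmul :: "'f \<Rightarrow> 'a \<Rightarrow> 'a"
  lbr :: "'a \<Rightarrow> 'a \<Rightarrow> 'a"

definition vector_space_on :: "('f::field, 'a) lsa \<Rightarrow> bool" where
  "vector_space_on L \<longleftrightarrow>
     lzero L \<in> lcarrier L \<and>
     (\<forall>x\<in>lcarrier L. \<forall>y\<in>lcarrier L. ladd L x y \<in> lcarrier L) \<and>
     (\<forall>x\<in>lcarrier L. lneg L x \<in> lcarrier L) \<and>
     (\<forall>c. \<forall>x\<in>lcarrier L. lsmul L c x \<in> lcarrier L) \<and>
     (\<forall>x\<in>lcarrier L. \<forall>y\<in>lcarrier L. \<forall>z\<in>lcarrier L.
        ladd L (ladd L x y) z = ladd L x (ladd L y z)) \<and>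
     (\<forall>x\<in>lcarrier L. \<forall>y\<in>lcarrier L. ladd L x y = ladd L y x) \<and>
     (\<forall>x\<in>lcarrier L. ladd L x (lzero L) = x) \<and>
     (\<forall>x\<in>lcarrier L. ladd L x (lneg L x) = lzero L) \<and>
     (\<forall>a b. \<forall>x\<in>lcarrier L. lsmul L (a * b) x = lsmul L a (lsmul L b x)) \<and>
     (\<forall>x\<in>lcarrier L. lsmul L 1 x = x) \<and>
     (\<forall>a. \<forall>x\<in>lcarrier L. \<forall>y\<in>lcarrier L.
        lsmul L a (ladd L x y) = ladd L (lsmul L a x) (lsmul L a y)) \<and>
     (\<forall>a b. \<forall>x\<in>lcarrier L. lsmul L (a + b) x = ladd L (lsmul L a x) (lsmul L b x))"

definition subspace_on :: "('f::field, 'a) lsa \<Rightarrow> 'a set \<Rightarrow> bool" where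
  "subspace_on L S \<longleftrightarrow> S \<subseteq> lcarrier L \<and> lzero L \<in> S \<and>
     (\<forall>x\<in>S. \<forall>y\<in>S. ladd L x y \<in> S) \<and> (\<forall>c. \<forall>x\<in>S. lsmul L c x \<in> S)"

definition hom :: "('f, 'a) lsa \<Rightarrow> nat \<Rightarrow> 'a set" where
  "hom L d = (if d = 0 then leven L else lodd L)"

definition lie_superalgebra :: "('f::field, 'a) lsa \<Rightarrow> bool" where
  "lie_superalgebra L \<longleftrightarrow>
     vector_space_on L \<and>
     subspace_on L (leven L) \<and> subspace_on L (lodd L) \<and>
     leven L \<inter> lodd L = {lzero L} \<and>
     (\<forall>x\<in>lcarrier L. \<exists>e\<in>leven L. \<exists>d\<in>lodd L. x = ladd L e d) \<and>
     (\<forall>x\<in>lcarrier L. \<forall>y\<in>lcarrier L. lbr L x y \<in> lcarrier L) \<and>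
     (\<forall>a b. \<forall>x\<in>lcarrier L. \<forall>y\<in>lcarrier L. \<forall>z\<in>lcarrier L.
        lbr L (ladd L (lsmul L a x) (lsmul L b y)) z
          = ladd L (lsmul L a (lbr L x z)) (lsmul L b (lbr L y z)) \<and>
        lbr L z (ladd L (lsmul L a x) (lsmul L b y))
          = ladd L (lsmul L a (lbr L z x)) (lsmul L b (lbr L z y))) \<and>
     (\<forall>dx<2. \<forall>dy<2. \<forall>x\<in>hom L dx. \<forall>y\<in>hom L dy.
        lbr L x y \<in> hom L ((dx + dy) mod 2)) \<and>
     (\<forall>dx<2. \<forall>dy<2. \<forall>x\<in>hom L dx. \<forall>y\<in>hom L dy.
        lbr L x y = lneg L (lsmul L ((-1) ^ (dx * dy)) (lbr L y x))) \<and>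
     (\<forall>dx<2. \<forall>dy<2. \<forall>dz<2. \<forall>x\<in>hom L dx. \<forall>y\<in>hom L dy. \<forall>z\<in>hom L dz.
        ladd L (lsmul L ((-1) ^ (dx * dz)) (lbr L x (lbr L y z)))
          (ladd L (lsmul L ((-1) ^ (dy * dx)) (lbr L y (lbr L z x)))
                  (lsmul L ((-1) ^ (dz * dy)) (lbr L z (lbr L x y)))) = lzero L)"

definition lsa_iso :: "('f::field, 'a) lsa \<Rightarrow> ('f, 'b) lsa \<Rightarrow> bool" where
  "lsa_iso A B \<longleftrightarrow> (\<exists>f. bij_betw f (lcarrier A) (lcarrier B) \<and>
     f ` leven A = leven B \<and> f ` lodd A = lodd B \<and>
     (\<forall>x\<in>lcarrier A. \<forall>y\<in>lcarrier A. f (ladd A x y) = ladd B (f x) (f y)) \<and>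
     (\<forall>c. \<forall>x\<in>lcarrier A. f (lsmul A c x) = lsmul B c (f x)) \<and>
     (\<forall>x\<in>lcarrier A. \<forall>y\<in>lcarrier A. f (lbr A x y) = lbr B (f x) (f y)))"

definition center :: "('f, 'a) lsa \<Rightarrow> 'a set" where
  "center L = {z \<in> lcarrier L. \<forall>x\<in>lcarrier L. lbr L z x = lzero L}"

definition coset :: "('f, 'a) lsa \<Rightarrow> 'a set \<Rightarrow> 'a \<Rightarrow> 'a set" where
  "coset L I x = {ladd L x i | i. i \<in> I}"

definition rep :: "'a set \<Rightarrow> 'a" where
  "rep A = (SOME a. a \<in> A)"

definition quotient :: "('f, 'a) lsa \<Rightarrow> 'a set \<Rightarrow> ('f, 'a set) lsa" where
  "quotient L I =
     \<lparr> lcarrier = coset L I ` lcarrier L,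
       leven = coset L I ` leven L,
       lodd = coset L I ` lodd L,
       ladd = (\<lambda>A B. coset L I (ladd L (rep A) (rep B))),
       lzero = coset L I (lzero L),
       lneg = (\<lambda>A. coset L I (lneg L (rep A))),
       lsmul = (\<lambda>c A. coset L I (lsmul L c (rep A))),
       lbr = (\<lambda>A B. coset L I (lbr L (rep A) (rep B))) \<rparr>"

text \<open>L is capable (with witness H taken from ambient type 'b) if L \<cong> H/Z(H).\<close>
definition capable_in :: "'b itself \<Rightarrow> ('f::field, 'a) lsa \<Rightarrow> bool" where
  "capable_in T L \<longleftrightarrow> (\<exists>H :: ('f, 'b) lsa.
      lie_superalgebra H \<and> lsa_iso (quotient H (center H)) L)"

text \<open>The Heisenberg Lie superalgebra H(m,n), realised on functions nat \<Rightarrow> 'f supported on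
  {0..2m+n}: basis vector e_k for k<2m is x_{k+1}, e_{2m} is z, e_{2m+1+j} is y_{j+1}.
  Nonzero brackets [x_i,x_{m+i}] = z = -[x_{m+i},x_i], [y_j,y_j] = z.\<close>
definition heis :: "nat \<Rightarrow> nat \<Rightarrow> ('f::field, nat \<Rightarrow> 'f) lsa" where
  "heis m n =
     \<lparr> lcarrier = {u. \<forall>k\<ge>2*m+n+1. u k = 0},
       leven = {u. \<forall>k>2*m. u k = 0},
       lodd = {u. (\<forall>k\<le>2*m. u k = 0) \<and> (\<forall>k\<ge>2*m+n+1. u k = 0)},
       ladd = (\<lambda>u v k. u k + v k),
       lzero = (\<lambda>k. 0),
       lneg = (\<lambda>u k. - u k),
       lsmul = (\<lambda>c u k. c * u k),
       lbr = (\<lambda>u v k. if k = 2*m then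
                 (\<Sum>i<m. u i * v (m+i) - u (m+i) * v i)
                 + (\<Sum>j<n. u (2*m+1+j) * v (2*m+1+j))
               else 0) \<rparr>"

end

theory Submission
  imports Defs
begin

text \<open>Suppose \<open>H/Z(H) \<cong> H(m,n)\<close> and let \<open>w\<close> be a preimage of \<open>z\<close>. Since all brackets of
  \<open>H(m,n)\<close> are multiples of \<open>z\<close>, every bracket in \<open>H\<close> is congruent modulo \<open>Z(H)\<close> to a
  multiple of \<open>w\<close>. Hence if \<open>w = [a,b]\<close> for homogeneous \<open>a, b\<close> with \<open>[a,w] = [b,w] = 0\<close>,
  the graded Jacobi identity for \<open>a, b, h\<close> gives \<open>[h,w] = 0\<close> for all homogeneous \<open>h\<close>, so \<open>w\<close>
  is central although its image \<open>z\<close> is not zero. Such \<open>a, b\<close> exist whenever \<open>n \<ge> 1\<close>: take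
  \<open>a = b\<close> a preimage of \<open>y\<^sub>1\<close>; the Jacobi identity gives \<open>3[y,[y,y]] = 0\<close>. They also exist
  whenever \<open>m \<ge> 2\<close>: preimages of \<open>x\<^sub>1, x\<^bsub>m+1\<^esub>\<close> commute modulo the center with preimages
  of \<open>x\<^sub>2, x\<^bsub>m+2\<^esub>\<close>, so by Jacobi they kill \<open>[x\<^sub>2, x\<^bsub>m+2\<^esub>] \<equiv> w\<close>.
  Conversely \<open>H(1,0)\<close> is the quotient by the center of the filiform Lie algebra with
  \<open>[e\<^sub>0,e\<^sub>1] = e\<^sub>2\<close>, \<open>[e\<^sub>0,e\<^sub>2] = e\<^sub>3\<close>, whose center is spanned by \<open>e\<^sub>3\<close>.\<close>

definition is_lsa_iso :: "('a \<Rightarrow> 'b) \<Rightarrow> ('f::field, 'a) lsa \<Rightarrow> ('f, 'b) lsa \<Rightarrow> bool" where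
  "is_lsa_iso f A B \<longleftrightarrow> bij_betw f (lcarrier A) (lcarrier B) \<and>
     f ` leven A = leven B \<and> f ` lodd A = lodd B \<and>
     (\<forall>x\<in>lcarrier A. \<forall>y\<in>lcarrier A. f (ladd A x y) = ladd B (f x) (f y)) \<and>
     (\<forall>c. \<forall>x\<in>lcarrier A. f (lsmul A c x) = lsmul B c (f x)) \<and>
     (\<forall>x\<in>lcarrier A. \<forall>y\<in>lcarrier A. f (lbr A x y) = lbr B (f x) (f y))"

lemma lsa_iso_iff: "lsa_iso A B \<longleftrightarrow> (\<exists>f. is_lsa_iso f A B)"
  by (simp add: lsa_iso_def is_lsa_iso_def)

section \<open>Lie superalgebras\<close>

locale lie_superalg =
  fixes L :: "('f::field, 'a) lsa"
  assumes lie: "lie_superalgebra L"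
begin

abbreviation V where "V \<equiv> lcarrier L"
abbreviation V\<^sub>0 where "V\<^sub>0 \<equiv> leven L"
abbreviation V\<^sub>1 where "V\<^sub>1 \<equiv> lodd L"
abbreviation Z where "Z \<equiv> center L"
abbreviation add (infixl "\<oplus>" 65) where "x \<oplus> y \<equiv> ladd L x y"
abbreviation smul (infixr "\<odot>" 75) where "c \<odot> x \<equiv> lsmul L c x"
abbreviation bracket ("\<lbrace>_, _\<rbrace>") where "\<lbrace>x, y\<rbrace> \<equiv> lbr L x y"
abbreviation zero ("\<zero>") where "\<zero> \<equiv> lzero L"

lemma vector_space: "vector_space_on L"
  using lie by (simp add: lie_superalgebra_def)

lemma
  shows zero_closed [simp]: "\<zero> \<in> V"
    and add_closed [simp]: "x \<in> V \<Longrightarrow> y \<in> V \<Longrightarrow> x \<oplus> y \<in> V"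
    and neg_closed [simp]: "x \<in> V \<Longrightarrow> lneg L x \<in> V"
    and smul_closed [simp]: "x \<in> V \<Longrightarrow> c \<odot> x \<in> V"
    and add_zero [simp]: "x \<in> V \<Longrightarrow> x \<oplus> \<zero> = x"
    and add_neg [simp]: "x \<in> V \<Longrightarrow> x \<oplus> lneg L x = \<zero>"
    and smul_one [simp]: "x \<in> V \<Longrightarrow> 1 \<odot> x = x"
    and smul_smul: "x \<in> V \<Longrightarrow> a \<odot> b \<odot> x = (a * b) \<odot> x"
    and smul_add_right: "x \<in> V \<Longrightarrow> y \<in> V \<Longrightarrow> a \<odot> (x \<oplus> y) = a \<odot> x \<oplus> a \<odot> y"
    and smul_add_left: "x \<in> V \<Longrightarrow> (a + b) \<odot> x = a \<odot> x \<oplus> b \<odot> x"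
  using vector_space by (simp_all add: vector_space_on_def)

lemma add_assoc: "x \<in> V \<Longrightarrow> y \<in> V \<Longrightarrow> z \<in> V \<Longrightarrow> x \<oplus> y \<oplus> z = x \<oplus> (y \<oplus> z)"
  using vector_space unfolding vector_space_on_def by blast

lemma add_commute: "x \<in> V \<Longrightarrow> y \<in> V \<Longrightarrow> x \<oplus> y = y \<oplus> x"
  using vector_space unfolding vector_space_on_def by blast

lemma zero_add [simp]: "x \<in> V \<Longrightarrow> \<zero> \<oplus> x = x"
  using add_commute[of \<zero> x] by simp

lemma neg_add [simp]: "x \<in> V \<Longrightarrow> lneg L x \<oplus> x = \<zero>"
  using add_commute[of "lneg L x" x] by simp

lemma add_left_cancel:
  assumes "x \<in> V" "y \<in> V" "z \<in> V" "x \<oplus> y = x \<oplus> z"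
  shows "y = z"
proof -
  have "y = lneg L x \<oplus> x \<oplus> y" using assms by simp
  also have "\<dots> = lneg L x \<oplus> (x \<oplus> z)" using assms by (simp only: add_assoc neg_closed)
  also have "\<dots> = z" using assms by (simp only: add_assoc [symmetric] neg_closed neg_add zero_add)
  finally show ?thesis .
qed

lemma smul_zero_left [simp]: assumes "x \<in> V" shows "0 \<odot> x = \<zero>"
proof -
  have "0 \<odot> x \<oplus> 0 \<odot> x = 0 \<odot> x \<oplus> \<zero>"
    using assms smul_add_left[of x 0 0] by simp
  with assms show ?thesis by (meson add_left_cancel smul_closed zero_closed)
qed

lemma smul_zero_right [simp]: "c \<odot> \<zero> = \<zero>"
  using smul_smul[of \<zero> c 0] by simp

lemma neg_eq_smul: assumes "x \<in> V" shows "lneg L x = (-1) \<odot> x"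
proof -
  have "x \<oplus> (-1) \<odot> x = (1 + -1) \<odot> x" using assms smul_add_left[of x 1 "-1"] by simp
  also have "\<dots> = x \<oplus> lneg L x" using assms by simp
  finally show ?thesis using assms by (metis add_left_cancel neg_closed smul_closed)
qed

lemma neg_zero [simp]: "lneg L \<zero> = \<zero>"
  using neg_eq_smul[of \<zero>] by simp

lemma smul_eq_zero_imp: assumes "x \<in> V" "c \<noteq> 0" "c \<odot> x = \<zero>" shows "x = \<zero>"
  using assms smul_smul[of x "inverse c" c] by simp

lemma even_subspace: "subspace_on L V\<^sub>0" and odd_subspace: "subspace_on L V\<^sub>1"
  using lie by (simp_all add: lie_superalgebra_def)

lemma even_closed: "x \<in> V\<^sub>0 \<Longrightarrow> x \<in> V" and odd_closed: "x \<in> V\<^sub>1 \<Longrightarrow> x \<in> V"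
  using even_subspace odd_subspace by (auto simp: subspace_on_def)

lemma odd_smul_closed: "x \<in> V\<^sub>1 \<Longrightarrow> c \<odot> x \<in> V\<^sub>1"
  using odd_subspace by (simp add: subspace_on_def)

lemma even_inter_odd: "V\<^sub>0 \<inter> V\<^sub>1 = {\<zero>}"
  using lie by (simp add: lie_superalgebra_def)

lemma even_odd_decomp: "x \<in> V \<Longrightarrow> \<exists>e\<in>V\<^sub>0. \<exists>d\<in>V\<^sub>1. x = e \<oplus> d"
  using lie by (simp add: lie_superalgebra_def)

lemma hom_0 [simp]: "hom L 0 = V\<^sub>0" and hom_1 [simp]: "hom L (Suc 0) = V\<^sub>1"
  by (simp_all add: hom_def)

lemma hom_closed: "d < 2 \<Longrightarrow> x \<in> hom L d \<Longrightarrow> x \<in> V"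
  by (auto simp: hom_def split: if_splits intro: even_closed odd_closed)

lemma bracket_closed [simp]: "x \<in> V \<Longrightarrow> y \<in> V \<Longrightarrow> \<lbrace>x, y\<rbrace> \<in> V"
  using lie by (simp add: lie_superalgebra_def)

lemma bracket_bilinear:
  "x \<in> V \<Longrightarrow> y \<in> V \<Longrightarrow> z \<in> V \<Longrightarrow> \<lbrace>a \<odot> x \<oplus> b \<odot> y, z\<rbrace> = a \<odot> \<lbrace>x, z\<rbrace> \<oplus> b \<odot> \<lbrace>y, z\<rbrace>"
  "x \<in> V \<Longrightarrow> y \<in> V \<Longrightarrow> z \<in> V \<Longrightarrow> \<lbrace>z, a \<odot> x \<oplus> b \<odot> y\<rbrace> = a \<odot> \<lbrace>z, x\<rbrace> \<oplus> b \<odot> \<lbrace>z, y\<rbrace>"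
  using lie unfolding lie_superalgebra_def by blast+

lemma bracket_degree:
  "dx < 2 \<Longrightarrow> dy < 2 \<Longrightarrow> x \<in> hom L dx \<Longrightarrow> y \<in> hom L dy \<Longrightarrow> \<lbrace>x, y\<rbrace> \<in> hom L ((dx + dy) mod 2)"
  using lie unfolding lie_superalgebra_def by blast

lemma bracket_antisym:
  "dx < 2 \<Longrightarrow> dy < 2 \<Longrightarrow> x \<in> hom L dx \<Longrightarrow> y \<in> hom L dy \<Longrightarrow>
   \<lbrace>x, y\<rbrace> = lneg L ((-1) ^ (dx * dy) \<odot> \<lbrace>y, x\<rbrace>)"
  using lie unfolding lie_superalgebra_def by blast

lemma jacobi:
  "dx < 2 \<Longrightarrow> dy < 2 \<Longrightarrow> dz < 2 \<Longrightarrow> x \<in> hom L dx \<Longrightarrow> y \<in> hom L dy \<Longrightarrow> z \<in> hom L dz \<Longrightarrow>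
   (-1) ^ (dx * dz) \<odot> \<lbrace>x, \<lbrace>y, z\<rbrace>\<rbrace> \<oplus> ((-1) ^ (dy * dx) \<odot> \<lbrace>y, \<lbrace>z, x\<rbrace>\<rbrace>
     \<oplus> (-1) ^ (dz * dy) \<odot> \<lbrace>z, \<lbrace>x, y\<rbrace>\<rbrace>) = \<zero>"
  using lie unfolding lie_superalgebra_def by blast

lemma bracket_add_left: "x \<in> V \<Longrightarrow> y \<in> V \<Longrightarrow> z \<in> V \<Longrightarrow> \<lbrace>x \<oplus> y, z\<rbrace> = \<lbrace>x, z\<rbrace> \<oplus> \<lbrace>y, z\<rbrace>"
  and bracket_add_right: "x \<in> V \<Longrightarrow> y \<in> V \<Longrightarrow> z \<in> V \<Longrightarrow> \<lbrace>z, x \<oplus> y\<rbrace> = \<lbrace>z, x\<rbrace> \<oplus> \<lbrace>z, y\<rbrace>"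
  using bracket_bilinear[of x y z 1 1] by simp_all

lemma bracket_smul_left: "x \<in> V \<Longrightarrow> z \<in> V \<Longrightarrow> \<lbrace>c \<odot> x, z\<rbrace> = c \<odot> \<lbrace>x, z\<rbrace>"
  and bracket_smul_right: "x \<in> V \<Longrightarrow> z \<in> V \<Longrightarrow> \<lbrace>z, c \<odot> x\<rbrace> = c \<odot> \<lbrace>z, x\<rbrace>"
  using bracket_bilinear[of x x z c 0] by simp_all

lemma bracket_zero_left [simp]: "x \<in> V \<Longrightarrow> \<lbrace>\<zero>, x\<rbrace> = \<zero>"
  and bracket_zero_right [simp]: "x \<in> V \<Longrightarrow> \<lbrace>x, \<zero>\<rbrace> = \<zero>"
  using bracket_smul_left[of \<zero> x 0] bracket_smul_right[of \<zero> x 0] by simp_all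

lemma even_odd_sum_eq_zero:
  assumes "u \<in> V\<^sub>0" "v \<in> V\<^sub>1" "u \<oplus> v = \<zero>"
  shows "u = \<zero>" "v = \<zero>"
proof -
  have V: "u \<in> V" "v \<in> V" using assms even_closed odd_closed by auto
  have "v \<oplus> u = v \<oplus> lneg L v" using assms V add_commute by simp
  then have "u = (-1) \<odot> v" using V add_left_cancel neg_closed neg_eq_smul by metis
  then have "u \<in> V\<^sub>1" using assms odd_smul_closed by simp
  then show "u = \<zero>" using assms even_inter_odd by blast
  then show "v = \<zero>" using assms V by simp
qed

lemma homogeneous_sum_eq_zero:
  assumes "d < 2" "k < 2" "d \<noteq> k" "u \<in> hom L d" "v \<in> hom L k" "u \<oplus> v = \<zero>"
  shows "u = \<zero> \<and> v = \<zero>"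
proof (cases "d = 0")
  case True
  with assms have "u \<in> V\<^sub>0" "v \<in> V\<^sub>1" by (auto simp: hom_def)
  with assms show ?thesis using even_odd_sum_eq_zero by blast
next
  case False
  with assms have "v \<in> V\<^sub>0" "u \<in> V\<^sub>1" "v \<oplus> u = \<zero>"
    by (auto simp: hom_def add_commute odd_closed even_closed)
  then show ?thesis using even_odd_sum_eq_zero by blast
qed

lemma bracket_swap_eq_zero:
  assumes "dx < 2" "dy < 2" "x \<in> hom L dx" "y \<in> hom L dy" "\<lbrace>x, y\<rbrace> = \<zero>"
  shows "\<lbrace>y, x\<rbrace> = \<zero>"
  using bracket_antisym[OF assms(2,1,4,3)] assms(5) by simp

lemma bracket_eq_zero_by_homogeneous_left:
  assumes "g \<in> V" "x \<in> V" "\<And>d h. d < 2 \<Longrightarrow> h \<in> hom L d \<Longrightarrow> \<lbrace>h, g\<rbrace> = \<zero>"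
  shows "\<lbrace>x, g\<rbrace> = \<zero>"
proof -
  obtain e d where "e \<in> V\<^sub>0" "d \<in> V\<^sub>1" "x = e \<oplus> d" using even_odd_decomp assms by blast
  with assms show ?thesis
    using assms(3)[of 0 e] assms(3)[of 1 d] by (simp add: bracket_add_left even_closed odd_closed)
qed

lemma bracket_eq_zero_by_homogeneous_right:
  assumes "g \<in> V" "x \<in> V" "\<And>d h. d < 2 \<Longrightarrow> h \<in> hom L d \<Longrightarrow> \<lbrace>g, h\<rbrace> = \<zero>"
  shows "\<lbrace>g, x\<rbrace> = \<zero>"
proof -
  obtain e d where "e \<in> V\<^sub>0" "d \<in> V\<^sub>1" "x = e \<oplus> d" using even_odd_decomp assms by blast
  with assms show ?thesis
    using assms(3)[of 0 e] assms(3)[of 1 d] by (simp add: bracket_add_right even_closed odd_closed)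
qed

lemma center_closed: "c \<in> Z \<Longrightarrow> c \<in> V"
  and center_bracket_left: "c \<in> Z \<Longrightarrow> x \<in> V \<Longrightarrow> \<lbrace>c, x\<rbrace> = \<zero>"
  by (auto simp: center_def)

lemma zero_in_center: "\<zero> \<in> Z"
  and center_add: "c \<in> Z \<Longrightarrow> c' \<in> Z \<Longrightarrow> c \<oplus> c' \<in> Z"
  and center_smul: "c \<in> Z \<Longrightarrow> a \<odot> c \<in> Z"
  by (auto simp: center_def bracket_add_left bracket_smul_left)

lemma center_neg: "c \<in> Z \<Longrightarrow> lneg L c \<in> Z"
  using center_smul center_closed neg_eq_smul by metis

text \<open>The center is defined by a left-sided condition. It is two-sided because the bracket
  of a central element with a homogeneous element splits into homogeneous components
  of different degrees.\<close>

lemma center_bracket_right: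
  assumes "c \<in> Z" "x \<in> V"
  shows "\<lbrace>x, c\<rbrace> = \<zero>"
proof -
  obtain e d where ed: "e \<in> V\<^sub>0" "d \<in> V\<^sub>1" "c = e \<oplus> d"
    using even_odd_decomp center_closed assms by blast
  have V: "e \<in> V" "d \<in> V" using ed even_closed odd_closed by auto
  have components: "\<lbrace>e, h\<rbrace> = \<zero> \<and> \<lbrace>d, h\<rbrace> = \<zero>" if "k < 2" "h \<in> hom L k" for k h
  proof (rule homogeneous_sum_eq_zero)
    show "\<lbrace>e, h\<rbrace> \<in> hom L k" using bracket_degree[of 0 k e h] that ed by simp
    show "\<lbrace>d, h\<rbrace> \<in> hom L ((1 + k) mod 2)" using bracket_degree[of 1 k d h] that ed by simp
    show "\<lbrace>e, h\<rbrace> \<oplus> \<lbrace>d, h\<rbrace> = \<zero>"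
      using center_bracket_left[OF assms(1), of h] ed V that hom_closed by (simp add: bracket_add_left)
  qed (use that in \<open>auto simp: less_2_cases_iff\<close>)
  have "\<lbrace>x, e\<rbrace> = \<zero>"
    by (rule bracket_eq_zero_by_homogeneous_left)
      (use V assms components bracket_swap_eq_zero[of 0 _ e] ed in auto)
  moreover have "\<lbrace>x, d\<rbrace> = \<zero>"
    by (rule bracket_eq_zero_by_homogeneous_left)
      (use V assms components bracket_swap_eq_zero[of 1 _ d] ed in auto)
  ultimately show ?thesis using ed V assms by (simp add: bracket_add_right)
qed

abbreviation cls where "cls \<equiv> coset L Z"
abbreviation Q where "Q \<equiv> quotient L Z"

lemma coset_self: "x \<in> V \<Longrightarrow> x \<in> cls x"
  unfolding coset_def using zero_in_center by force

lemma coset_add_center: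
  assumes "x \<in> V" "i \<in> Z"
  shows "cls (x \<oplus> i) = cls x"
proof (intro equalityI subsetI)
  have i: "i \<in> V" "lneg L i \<in> Z" using assms center_closed center_neg by auto
  fix u
  assume "u \<in> cls (x \<oplus> i)"
  then obtain j where "j \<in> Z" "u = x \<oplus> i \<oplus> j" unfolding coset_def by blast
  then show "u \<in> cls x"
    unfolding coset_def using assms i center_add center_closed by (force simp: add_assoc)
next
  have i: "i \<in> V" "lneg L i \<in> Z" using assms center_closed center_neg by auto
  fix u
  assume "u \<in> cls x"
  then obtain j where j: "j \<in> Z" "u = x \<oplus> j" unfolding coset_def by blast
  have "i \<oplus> (lneg L i \<oplus> j) = j"
    using i j center_closed by (simp add: add_assoc [symmetric])
  then have "u = x \<oplus> i \<oplus> (lneg L i \<oplus> j)"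
    using assms i j center_closed by (simp add: add_assoc)
  then show "u \<in> cls (x \<oplus> i)"
    unfolding coset_def using i j center_add by blast
qed

lemma coset_eqD:
  assumes "y \<in> V" "cls x = cls y"
  shows "\<exists>i\<in>Z. y = x \<oplus> i"
  using coset_self[OF assms(1)] assms(2) unfolding coset_def by blast

lemma coset_eq_zero_iff: "x \<in> V \<Longrightarrow> cls x = cls \<zero> \<longleftrightarrow> x \<in> Z"
  using coset_eqD[of x \<zero>] coset_add_center[of \<zero> x] center_closed by (auto simp: eq_commute)

lemma rep_coset: "x \<in> V \<Longrightarrow> \<exists>i\<in>Z. rep (cls x) = x \<oplus> i"
  using someI[of "\<lambda>a. a \<in> cls x", OF coset_self] unfolding rep_def coset_def by blast

lemma coset_rep: "x \<in> V \<Longrightarrow> cls (rep (cls x)) = cls x"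
  using rep_coset coset_add_center by force

lemma bracket_coset_congr:
  assumes "x \<in> V" "u \<in> V" "v \<in> V" "cls u = cls v"
  shows "\<lbrace>x, u\<rbrace> = \<lbrace>x, v\<rbrace> \<and> \<lbrace>u, x\<rbrace> = \<lbrace>v, x\<rbrace>"
proof -
  obtain i where "i \<in> Z" "v = u \<oplus> i" using coset_eqD assms by blast
  then show ?thesis
    using assms center_closed center_bracket_left center_bracket_right
    by (simp add: bracket_add_left bracket_add_right)
qed

lemma quotient_carrier: "lcarrier Q = cls ` V"
  and quotient_even: "leven Q = cls ` V\<^sub>0"
  and quotient_odd: "lodd Q = cls ` V\<^sub>1"
  by (simp_all add: quotient_def)

lemma add_add_swap:
  assumes "x \<in> V" "i \<in> V" "y \<in> V" "j \<in> V"
  shows "x \<oplus> i \<oplus> (y \<oplus> j) = x \<oplus> y \<oplus> (i \<oplus> j)"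
proof -
  have "x \<oplus> i \<oplus> (y \<oplus> j) = x \<oplus> (i \<oplus> y \<oplus> j)" using assms by (simp add: add_assoc)
  also have "\<dots> = x \<oplus> (y \<oplus> i \<oplus> j)" using assms add_commute[of i y] by simp
  also have "\<dots> = x \<oplus> y \<oplus> (i \<oplus> j)" using assms by (simp add: add_assoc)
  finally show ?thesis .
qed

lemma quotient_add: "x \<in> V \<Longrightarrow> y \<in> V \<Longrightarrow> ladd Q (cls x) (cls y) = cls (x \<oplus> y)"
proof -
  assume xy: "x \<in> V" "y \<in> V"
  then obtain i j where "i \<in> Z" "j \<in> Z" "rep (cls x) = x \<oplus> i" "rep (cls y) = y \<oplus> j"
    using rep_coset by meson
  moreover from this xy have "x \<oplus> i \<oplus> (y \<oplus> j) = x \<oplus> y \<oplus> (i \<oplus> j)"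
    using center_closed add_add_swap by simp
  ultimately show ?thesis
    using xy center_add coset_add_center by (simp add: quotient_def)
qed

lemma quotient_smul: "x \<in> V \<Longrightarrow> lsmul Q c (cls x) = cls (c \<odot> x)"
proof -
  assume x: "x \<in> V"
  then obtain i where "i \<in> Z" "rep (cls x) = x \<oplus> i" using rep_coset by blast
  with x show ?thesis
    using center_closed center_smul coset_add_center
    by (simp add: quotient_def smul_add_right)
qed

lemma quotient_bracket: "x \<in> V \<Longrightarrow> y \<in> V \<Longrightarrow> lbr Q (cls x) (cls y) = cls \<lbrace>x, y\<rbrace>"
proof -
  assume xy: "x \<in> V" "y \<in> V"
  have reps: "rep (cls x) \<in> V" "rep (cls y) \<in> V"
    using xy rep_coset center_closed by (metis add_closed)+
  have "\<lbrace>rep (cls x), rep (cls y)\<rbrace> = \<lbrace>x, rep (cls y)\<rbrace>"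
    using bracket_coset_congr[of "rep (cls y)" "rep (cls x)" x] xy reps coset_rep by simp
  also have "\<dots> = \<lbrace>x, y\<rbrace>"
    using bracket_coset_congr[of x "rep (cls y)" y] xy reps coset_rep by simp
  finally show ?thesis by (simp add: quotient_def)
qed

lemma is_lsa_iso_quotient_center:
  assumes onto: "g ` V = lcarrier M" "g ` V\<^sub>0 = leven M" "g ` V\<^sub>1 = lodd M"
    and kernel: "\<And>x y. x \<in> V \<Longrightarrow> y \<in> V \<Longrightarrow> g x = g y \<longleftrightarrow> cls x = cls y"
    and add: "\<And>x y. x \<in> V \<Longrightarrow> y \<in> V \<Longrightarrow> g (x \<oplus> y) = ladd M (g x) (g y)"
    and smul: "\<And>c x. x \<in> V \<Longrightarrow> g (c \<odot> x) = lsmul M c (g x)"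
    and bracket: "\<And>x y. x \<in> V \<Longrightarrow> y \<in> V \<Longrightarrow> g \<lbrace>x, y\<rbrace> = lbr M (g x) (g y)"
  shows "is_lsa_iso (g \<circ> rep) Q M"
proof -
  have on_cosets: "(g \<circ> rep) (cls x) = g x" if x: "x \<in> V" for x
  proof -
    obtain i where "i \<in> Z" "rep (cls x) = x \<oplus> i" using rep_coset x by blast
    then have "rep (cls x) \<in> V" using x center_closed by simp
    then show ?thesis using kernel coset_rep x by simp
  qed
  then have image: "(g \<circ> rep) ` cls ` A = g ` A" if "A \<subseteq> V" for A
    using that by (force simp: image_image)
  have "V\<^sub>0 \<subseteq> V" "V\<^sub>1 \<subseteq> V" using even_closed odd_closed by auto
  then have "(g \<circ> rep) ` lcarrier Q = lcarrier M" "(g \<circ> rep) ` leven Q = leven M"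
    "(g \<circ> rep) ` lodd Q = lodd M"
    using image onto by (simp_all add: quotient_carrier quotient_even quotient_odd)
  moreover have "inj_on (g \<circ> rep) (lcarrier Q)"
    using on_cosets kernel by (auto simp: quotient_carrier intro!: inj_onI)
  ultimately show ?thesis
    unfolding is_lsa_iso_def bij_betw_def
    using on_cosets add smul bracket quotient_add quotient_smul quotient_bracket
    by (auto simp: quotient_carrier)
qed

lemma bracket_bracket_eq_zero_if_central:
  assumes "dx < 2" "dy < 2" "du < 2" "x \<in> hom L dx" "y \<in> hom L dy" "u \<in> hom L du"
    and "\<lbrace>u, x\<rbrace> \<in> Z" "\<lbrace>x, y\<rbrace> \<in> Z"
  shows "\<lbrace>x, \<lbrace>y, u\<rbrace>\<rbrace> = \<zero>"
proof -
  have V: "x \<in> V" "y \<in> V" "u \<in> V" using assms hom_closed by auto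
  have "\<lbrace>y, \<lbrace>u, x\<rbrace>\<rbrace> = \<zero>" "\<lbrace>u, \<lbrace>x, y\<rbrace>\<rbrace> = \<zero>"
    using center_bracket_right assms V by auto
  then have "(-1) ^ (dx * du) \<odot> \<lbrace>x, \<lbrace>y, u\<rbrace>\<rbrace> = \<zero>"
    using jacobi[OF assms(1-6)] V by simp
  then show ?thesis by (rule smul_eq_zero_imp[rotated 2]) (use V in simp_all)
qed

lemma bracket_eq_zero_if_coset_multiple:
  assumes "x \<in> V" "y \<in> V" "w \<in> V" "\<lbrace>x, w\<rbrace> = \<zero>" "cls y = cls (s \<odot> w)"
  shows "\<lbrace>x, y\<rbrace> = \<zero>"
  using bracket_coset_congr[of x y "s \<odot> w"] assms by (simp add: bracket_smul_right)

lemma bracket_in_center_if_brackets_proportional: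
  assumes "da < 2" "db < 2" "a \<in> hom L da" "b \<in> hom L db"
    and proportional: "\<forall>x\<in>V. \<forall>y\<in>V. \<exists>s. cls \<lbrace>x, y\<rbrace> = cls (s \<odot> \<lbrace>a, b\<rbrace>)"
    and "\<lbrace>a, \<lbrace>a, b\<rbrace>\<rbrace> = \<zero>" "\<lbrace>b, \<lbrace>a, b\<rbrace>\<rbrace> = \<zero>"
  shows "\<lbrace>a, b\<rbrace> \<in> Z"
proof -
  define w where "w = \<lbrace>a, b\<rbrace>"
  have V: "a \<in> V" "b \<in> V" "w \<in> V" using assms hom_closed w_def by auto
  have w_deg: "w \<in> hom L ((da + db) mod 2)" using bracket_degree assms w_def by blast
  have "\<lbrace>w, h\<rbrace> = \<zero>" if "d < 2" "h \<in> hom L d" for d h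
  proof -
    have h: "h \<in> V" using that hom_closed by blast
    have "\<lbrace>a, \<lbrace>b, h\<rbrace>\<rbrace> = \<zero>" "\<lbrace>b, \<lbrace>h, a\<rbrace>\<rbrace> = \<zero>"
      using proportional bracket_eq_zero_if_coset_multiple assms V h w_def by (meson bracket_closed)+
    then have "(-1) ^ (d * db) \<odot> \<lbrace>h, w\<rbrace> = \<zero>"
      using jacobi[OF assms(1,2) that(1) assms(3,4) that(2)] V h w_def by simp
    then have "\<lbrace>h, w\<rbrace> = \<zero>"
      by (rule smul_eq_zero_imp[rotated 2]) (use V h in simp_all)
    then show ?thesis using bracket_swap_eq_zero[of d "(da + db) mod 2" h w] that w_deg by simp
  qed
  then show ?thesis
    unfolding center_def w_def[symmetric] using bracket_eq_zero_by_homogeneous_right V by blast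
qed

lemma bracket_in_center_if_commuting_pairs:
  assumes "da < 2" "db < 2" "dc < 2" "dd < 2"
    and "a \<in> hom L da" "b \<in> hom L db" "c \<in> hom L dc" "d \<in> hom L dd"
    and "\<forall>x\<in>V. \<forall>y\<in>V. \<exists>s. cls \<lbrace>x, y\<rbrace> = cls (s \<odot> \<lbrace>a, b\<rbrace>)"
    and "cls \<lbrace>c, d\<rbrace> = cls \<lbrace>a, b\<rbrace>"
    and "\<lbrace>a, c\<rbrace> \<in> Z" "\<lbrace>d, a\<rbrace> \<in> Z" "\<lbrace>b, c\<rbrace> \<in> Z" "\<lbrace>d, b\<rbrace> \<in> Z"
  shows "\<lbrace>a, b\<rbrace> \<in> Z"
proof -
  have V: "a \<in> V" "b \<in> V" "c \<in> V" "d \<in> V" using assms hom_closed by auto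
  have "\<lbrace>a, \<lbrace>c, d\<rbrace>\<rbrace> = \<zero>" "\<lbrace>b, \<lbrace>c, d\<rbrace>\<rbrace> = \<zero>"
    using bracket_bracket_eq_zero_if_central assms by blast+
  moreover have "\<lbrace>x, \<lbrace>c, d\<rbrace>\<rbrace> = \<lbrace>x, \<lbrace>a, b\<rbrace>\<rbrace>" if "x \<in> V" for x
    using bracket_coset_congr[of x "\<lbrace>c, d\<rbrace>" "\<lbrace>a, b\<rbrace>"] assms V that by simp
  ultimately have "\<lbrace>a, \<lbrace>a, b\<rbrace>\<rbrace> = \<zero>" "\<lbrace>b, \<lbrace>a, b\<rbrace>\<rbrace> = \<zero>"
    using V by simp_all
  then show ?thesis using bracket_in_center_if_brackets_proportional[OF assms(1,2,5,6,9)] by blast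
qed

lemma odd_bracket_cube_eq_zero:
  assumes "(3::'f) \<noteq> 0" "y \<in> V\<^sub>1"
  shows "\<lbrace>y, \<lbrace>y, y\<rbrace>\<rbrace> = \<zero>"
proof -
  define v where "v = \<lbrace>y, \<lbrace>y, y\<rbrace>\<rbrace>"
  have V: "y \<in> V" "v \<in> V" using assms odd_closed v_def by auto
  have "(-1) \<odot> v \<oplus> ((-1) \<odot> v \<oplus> (-1) \<odot> v) = \<zero>"
    using jacobi[of 1 1 1 y y y] assms v_def by simp
  then have "(-3) \<odot> v = \<zero>" using V by (simp add: smul_add_left [symmetric])
  then show ?thesis unfolding v_def[symmetric] by (rule smul_eq_zero_imp[rotated 2]) (use V assms in simp_all)
qed

end

section \<open>Lie superalgebras whose central quotient is \<open>H(m,n)\<close>\<close>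

definition unit_vec :: "nat \<Rightarrow> nat \<Rightarrow> 'f::zero_neq_one" where
  "unit_vec p = (\<lambda>k. if k = p then 1 else 0)"

lemma heis_simps:
  "lcarrier (heis m n) = {u. \<forall>k\<ge>2*m+n+1. u k = 0}"
  "leven (heis m n) = {u. \<forall>k>2*m. u k = 0}"
  "lodd (heis m n) = {u. (\<forall>k\<le>2*m. u k = 0) \<and> (\<forall>k\<ge>2*m+n+1. u k = 0)}"
  "ladd (heis m n) = (\<lambda>u v k. u k + v k)"
  "lsmul (heis m n) = (\<lambda>c u k. c * u k)"
  "lbr (heis m n) = (\<lambda>u v k. if k = 2*m then
     (\<Sum>i<m. u i * v (m+i) - u (m+i) * v i) + (\<Sum>j<n. u (2*m+1+j) * v (2*m+1+j)) else 0)"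
  by (simp_all add: heis_def)

lemma heis_bracket_unit_vec:
  "lbr (heis m n) (unit_vec p) (unit_vec q) = (\<lambda>k.
     ((if p < m \<and> q = m + p then 1 else 0) - (if q < m \<and> p = m + q then 1 else 0)
      + (if 2*m < p \<and> p \<le> 2*m+n \<and> p = q then 1 else 0)) * (unit_vec (2*m) k :: 'f::field))"
proof -
  have sums: "(\<Sum>i<m. unit_vec p i * unit_vec q (m+i) :: 'f) = (if p < m \<and> q = m + p then 1 else 0)"
    "(\<Sum>i<m. unit_vec p (m+i) * unit_vec q i :: 'f) = (if q < m \<and> p = m + q then 1 else 0)"
    by (auto simp: unit_vec_def sum.delta if_distrib[of "\<lambda>x. x * _"] cong: if_cong)
  have "(\<Sum>j<n. unit_vec p (2*m+1+j) * unit_vec q (2*m+1+j) :: 'f) =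
       (\<Sum>j<n. if j = p - (2*m+1) then (if 2*m < p \<and> p = q then 1 else 0) else 0)"
    by (rule sum.cong) (auto simp: unit_vec_def)
  then have sum_odd: "(\<Sum>j<n. unit_vec p (2*m+1+j) * unit_vec q (2*m+1+j) :: 'f) =
       (if 2*m < p \<and> p \<le> 2*m+n \<and> p = q then 1 else 0)"
    by (auto simp: sum.delta)
  show ?thesis
    unfolding heis_simps sum_subtractf sums sum_odd by (simp add: fun_eq_iff unit_vec_def)
qed

lemma heis_bracket_eq_smul_unit_vec:
  "lbr (heis m n) u v = (\<lambda>k. lbr (heis m n) u v (2*m) * (unit_vec (2*m) k :: 'f::field))"
  by (simp add: heis_simps unit_vec_def fun_eq_iff)

locale center_quotient_iso_heis = lie_superalg L for L :: "('f::field, 'a) lsa" +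
  fixes m n :: nat and f :: "'a set \<Rightarrow> nat \<Rightarrow> 'f"
  assumes iso: "is_lsa_iso f Q (heis m n)"
begin

abbreviation H where "H \<equiv> heis m n :: ('f, nat \<Rightarrow> 'f) lsa"

definition proj :: "'a \<Rightarrow> nat \<Rightarrow> 'f" where "proj x = f (cls x)"

lemma coset_in_quotient: "x \<in> V \<Longrightarrow> cls x \<in> lcarrier Q"
  by (simp add: quotient_carrier)

lemma proj_smul: assumes "x \<in> V" shows "proj (c \<odot> x) = (\<lambda>k. c * proj x k)"
proof -
  have "f (lsmul Q c (cls x)) = lsmul H c (f (cls x))"
    using iso assms coset_in_quotient unfolding is_lsa_iso_def by blast
  then show ?thesis using assms quotient_smul by (simp add: proj_def heis_simps)
qed

lemma proj_bracket:
  assumes "x \<in> V" "y \<in> V" shows "proj \<lbrace>x, y\<rbrace> = lbr H (proj x) (proj y)"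
proof -
  have "f (lbr Q (cls x) (cls y)) = lbr H (f (cls x)) (f (cls y))"
    using iso assms coset_in_quotient unfolding is_lsa_iso_def by blast
  then show ?thesis using assms quotient_bracket by (simp add: proj_def)
qed

lemma proj_eq_imp_coset_eq: "x \<in> V \<Longrightarrow> y \<in> V \<Longrightarrow> proj x = proj y \<Longrightarrow> cls x = cls y"
  using iso coset_in_quotient inj_onD[of f "lcarrier Q"]
  unfolding is_lsa_iso_def bij_betw_def proj_def by simp

lemma proj_eq_zero_iff: assumes "x \<in> V" shows "proj x = (\<lambda>k. 0) \<longleftrightarrow> x \<in> Z"
proof -
  have "proj \<zero> = (\<lambda>k. 0)" using proj_smul[of \<zero> 0] by simp
  moreover have "proj x = proj \<zero>" if "x \<in> Z"
  proof -
    have "cls x = cls \<zero>" using that assms coset_eq_zero_iff by blast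
    then show ?thesis by (simp add: proj_def)
  qed
  ultimately show ?thesis
    using assms proj_eq_imp_coset_eq[of x \<zero>] coset_eq_zero_iff by auto
qed

lemma even_unit_vec_preimage:
  assumes "k \<le> 2*m"
  obtains x where "x \<in> V\<^sub>0" "proj x = unit_vec k"
proof -
  have "unit_vec k \<in> f ` leven Q"
    using iso assms by (auto simp: is_lsa_iso_def heis_simps unit_vec_def)
  with that show ?thesis by (auto simp: quotient_even proj_def)
qed

lemma odd_unit_vec_preimage:
  assumes "2*m < k" "k \<le> 2*m + n"
  obtains x where "x \<in> V\<^sub>1" "proj x = unit_vec k"
proof -
  have "unit_vec k \<in> f ` lodd Q"
    using iso assms by (auto simp: is_lsa_iso_def heis_simps unit_vec_def)
  with that show ?thesis by (auto simp: quotient_odd proj_def)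
qed

lemma bracket_in_center_iff:
  assumes "x \<in> V" "y \<in> V"
  shows "\<lbrace>x, y\<rbrace> \<in> Z \<longleftrightarrow> lbr H (proj x) (proj y) = (\<lambda>k. 0)"
  using proj_eq_zero_iff[of "\<lbrace>x, y\<rbrace>"] proj_bracket[OF assms] assms by simp

lemma brackets_proportional:
  assumes "w \<in> V" "proj w = unit_vec (2*m)"
  shows "\<forall>x\<in>V. \<forall>y\<in>V. \<exists>s. cls \<lbrace>x, y\<rbrace> = cls (s \<odot> w)"
proof (intro ballI exI)
  fix x y assume xy: "x \<in> V" "y \<in> V"
  have "proj \<lbrace>x, y\<rbrace> = (\<lambda>k. proj \<lbrace>x, y\<rbrace> (2*m) * unit_vec (2*m) k)"
    using proj_bracket[OF xy] heis_bracket_eq_smul_unit_vec by metis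
  also have "\<dots> = proj (proj \<lbrace>x, y\<rbrace> (2*m) \<odot> w)"
    using assms by (simp add: proj_smul)
  finally show "cls \<lbrace>x, y\<rbrace> = cls (proj \<lbrace>x, y\<rbrace> (2*m) \<odot> w)"
    using xy assms by (intro proj_eq_imp_coset_eq) simp_all
qed

lemma proj_eq_unit_vec_not_in_center:
  assumes "w \<in> V" "proj w = unit_vec (2*m)"
  shows "w \<notin> Z"
proof
  assume "w \<in> Z"
  then have "proj w = (\<lambda>k. 0)" using proj_eq_zero_iff assms(1) by blast
  then have "unit_vec (2*m) (2*m) = (0::'f)" using assms(2) by simp
  then show False by (simp add: unit_vec_def)
qed

lemma odd_generator_impossible:
  assumes "(3::'f) \<noteq> 0" "n \<ge> 1"
  shows False
proof -
  obtain y where y: "y \<in> V\<^sub>1" "proj y = unit_vec (2*m + 1)"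
    using odd_unit_vec_preimage[of "2*m + 1"] assms(2) by auto
  have V: "y \<in> V" using y odd_closed by blast
  have w: "proj \<lbrace>y, y\<rbrace> = unit_vec (2*m)"
    using proj_bracket[OF V V] y assms by (simp add: heis_bracket_unit_vec)
  have "\<lbrace>y, y\<rbrace> \<in> Z"
    using bracket_in_center_if_brackets_proportional[of 1 1 y y] brackets_proportional w V y
      odd_bracket_cube_eq_zero assms by simp
  then show False using proj_eq_unit_vec_not_in_center w V by simp
qed

lemma two_symplectic_pairs_impossible:
  assumes "2 \<le> m"
  shows False
proof -
  have indices: "0 \<le> 2*m" "m \<le> 2*m" "1 \<le> 2*m" "m + 1 \<le> 2*m" using assms by simp_all
  obtain a where a: "a \<in> V\<^sub>0" "proj a = unit_vec 0" by (rule even_unit_vec_preimage[OF indices(1)])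
  obtain b where b: "b \<in> V\<^sub>0" "proj b = unit_vec m" by (rule even_unit_vec_preimage[OF indices(2)])
  obtain c where c: "c \<in> V\<^sub>0" "proj c = unit_vec 1" by (rule even_unit_vec_preimage[OF indices(3)])
  obtain d where d: "d \<in> V\<^sub>0" "proj d = unit_vec (m + 1)" by (rule even_unit_vec_preimage[OF indices(4)])
  note even = a(1) b(1) c(1) d(1) and proj = a(2) b(2) c(2) d(2)
  have V: "a \<in> V" "b \<in> V" "c \<in> V" "d \<in> V" using even even_closed by auto
  have heis: "lbr H (unit_vec 0) (unit_vec m) = unit_vec (2*m)"
    "lbr H (unit_vec 1) (unit_vec (m + 1)) = unit_vec (2*m)"
    "lbr H (unit_vec 0) (unit_vec 1) = (\<lambda>k. 0)" "lbr H (unit_vec (m + 1)) (unit_vec 0) = (\<lambda>k. 0)"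
    "lbr H (unit_vec m) (unit_vec 1) = (\<lambda>k. 0)" "lbr H (unit_vec (m + 1)) (unit_vec m) = (\<lambda>k. 0)"
    using assms by (simp_all only: heis_bracket_unit_vec) (auto simp: fun_eq_iff unit_vec_def)
  have w: "proj \<lbrace>a, b\<rbrace> = unit_vec (2*m)" "proj \<lbrace>c, d\<rbrace> = unit_vec (2*m)"
    using proj_bracket V proj heis by simp_all
  have "\<lbrace>a, b\<rbrace> \<in> Z"
  proof (rule bracket_in_center_if_commuting_pairs[of 0 0 0 0 a b c d])
    show "\<forall>x\<in>V. \<forall>y\<in>V. \<exists>s. cls \<lbrace>x, y\<rbrace> = cls (s \<odot> \<lbrace>a, b\<rbrace>)"
      using brackets_proportional w V by simp
    show "cls \<lbrace>c, d\<rbrace> = cls \<lbrace>a, b\<rbrace>" using proj_eq_imp_coset_eq w V by simp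
    show "\<lbrace>a, c\<rbrace> \<in> Z" "\<lbrace>d, a\<rbrace> \<in> Z" "\<lbrace>b, c\<rbrace> \<in> Z" "\<lbrace>d, b\<rbrace> \<in> Z"
      using bracket_in_center_iff V proj heis by simp_all
  qed (use even in simp_all)
  then show False using proj_eq_unit_vec_not_in_center w V by simp
qed

lemma dimensions_eq_1_0:
  assumes "(3::'f) \<noteq> 0" "m + n \<ge> 1"
  shows "m = 1 \<and> n = 0"
proof -
  have "n = 0" using odd_generator_impossible[OF assms(1)] by fastforce
  moreover have "m < 2" using two_symplectic_pairs_impossible by fastforce
  ultimately show ?thesis using assms(2) by simp
qed

end

section \<open>\<open>H(1,0)\<close> is capable\<close>

definition filiform4 :: "('f::field, nat \<Rightarrow> 'f) lsa" where
  "filiform4 =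
     \<lparr> lcarrier = {u. \<forall>k\<ge>4. u k = 0}, leven = {u. \<forall>k\<ge>4. u k = 0}, lodd = {\<lambda>k. 0},
       ladd = (\<lambda>u v k. u k + v k), lzero = (\<lambda>k. 0), lneg = (\<lambda>u k. - u k),
       lsmul = (\<lambda>c u k. c * u k),
       lbr = (\<lambda>u v k. if k = 2 then u 0 * v 1 - u 1 * v 0
                     else if k = 3 then u 0 * v 2 - u 2 * v 0 else 0) \<rparr>"

lemma filiform4_lie_superalgebra: "lie_superalgebra (filiform4 :: ('f::field, nat \<Rightarrow> 'f) lsa)"
proof -
  let ?F = "filiform4 :: ('f, nat \<Rightarrow> 'f) lsa"
  have "vector_space_on ?F"
    by (simp add: vector_space_on_def filiform4_def fun_eq_iff algebra_simps)
  moreover have "subspace_on ?F (leven ?F)" "subspace_on ?F (lodd ?F)"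
    by (simp_all add: subspace_on_def filiform4_def)
  moreover have "leven ?F \<inter> lodd ?F = {lzero ?F}"
    "\<forall>x\<in>lcarrier ?F. \<exists>e\<in>leven ?F. \<exists>d\<in>lodd ?F. x = ladd ?F e d"
    by (auto simp: filiform4_def)
  moreover have "\<forall>x\<in>lcarrier ?F. \<forall>y\<in>lcarrier ?F. lbr ?F x y \<in> lcarrier ?F"
    by (simp add: filiform4_def)
  ultimately show ?thesis
    unfolding lie_superalgebra_def hom_def
    by (simp add: filiform4_def less_2_cases_iff fun_eq_iff algebra_simps)
qed

lemma filiform4_simps:
  "lcarrier (filiform4 :: ('f::field, nat \<Rightarrow> 'f) lsa) = {u. \<forall>k\<ge>4. u k = 0}"
  "leven (filiform4 :: ('f, nat \<Rightarrow> 'f) lsa) = {u. \<forall>k\<ge>4. u k = 0}"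
  "lodd (filiform4 :: ('f, nat \<Rightarrow> 'f) lsa) = {\<lambda>k. 0}"
  "ladd (filiform4 :: ('f, nat \<Rightarrow> 'f) lsa) = (\<lambda>u v k. u k + v k)"
  "lzero (filiform4 :: ('f, nat \<Rightarrow> 'f) lsa) = (\<lambda>k. 0)"
  "lsmul (filiform4 :: ('f, nat \<Rightarrow> 'f) lsa) = (\<lambda>c u k. c * u k)"
  "lbr (filiform4 :: ('f, nat \<Rightarrow> 'f) lsa) = (\<lambda>u v k. if k = 2 then u 0 * v 1 - u 1 * v 0
     else if k = 3 then u 0 * v 2 - u 2 * v 0 else 0)"
  by (simp_all add: filiform4_def)

interpretation filiform4: lie_superalg "filiform4 :: ('f::field, nat \<Rightarrow> 'f) lsa"
  by unfold_locales (rule filiform4_lie_superalgebra)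

lemma filiform4_center:
  "center (filiform4 :: ('f::field, nat \<Rightarrow> 'f) lsa) = {u. (\<forall>k\<ge>4. u k = 0) \<and> u 0 = 0 \<and> u 1 = 0 \<and> u 2 = 0}"
proof (intro equalityI subsetI)
  fix u :: "nat \<Rightarrow> 'f"
  assume u: "u \<in> center filiform4"
  have "lbr filiform4 u v = (\<lambda>k. 0)" if "v \<in> lcarrier filiform4" for v
    using u that by (simp add: center_def filiform4_simps)
  moreover have "unit_vec 0 \<in> lcarrier filiform4" "unit_vec 1 \<in> lcarrier filiform4"
    by (simp_all add: filiform4_simps unit_vec_def)
  ultimately have "lbr filiform4 u (unit_vec 1) = (\<lambda>k. 0)" "lbr filiform4 u (unit_vec 0) = (\<lambda>k. 0)"
    by blast+
  then have "u 0 = 0" "u 1 = 0" "u 2 = 0"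
    by (auto simp: filiform4_simps unit_vec_def fun_eq_iff dest: spec[of _ 2] spec[of _ 3])
  with u show "u \<in> {u. (\<forall>k\<ge>4. u k = 0) \<and> u 0 = 0 \<and> u 1 = 0 \<and> u 2 = 0}"
    by (simp add: center_def filiform4_simps)
qed (simp add: center_def filiform4_simps fun_eq_iff)

lemma filiform4_coset_eq_iff:
  fixes u v :: "nat \<Rightarrow> 'f::field"
  assumes "u \<in> lcarrier filiform4" "v \<in> lcarrier filiform4"
  shows "coset filiform4 (center filiform4) u = coset filiform4 (center filiform4) v \<longleftrightarrow> (\<forall>k<3. u k = v k)"
proof
  assume "coset filiform4 (center filiform4) u = coset filiform4 (center filiform4) v"
  then obtain i where "i \<in> center filiform4" "v = ladd filiform4 u i"
    using filiform4.coset_eqD assms(2) by blast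
  moreover from this have "i 0 = 0" "i 1 = 0" "i 2 = 0" by (simp_all add: filiform4_center)
  ultimately show "\<forall>k<3. u k = v k"
    by (auto simp: filiform4_simps less_Suc_eq numeral_3_eq_3 numeral_2_eq_2)
next
  assume low: "\<forall>k<3. u k = v k"
  define i where "i = (\<lambda>k. v k - u k)"
  have "i \<in> center filiform4"
    using assms low[rule_format, of 0] low[rule_format, of 1] low[rule_format, of 2]
    by (simp add: i_def filiform4_center filiform4_simps)
  moreover have "v = ladd filiform4 u i" by (simp add: i_def filiform4_simps)
  ultimately
  show "coset filiform4 (center filiform4) u = coset filiform4 (center filiform4) v"
    using filiform4.coset_add_center assms(1) by metis
qed

lemma heis_1_0_odd: "lodd (heis 1 0 :: ('f::field, nat \<Rightarrow> 'f) lsa) = {\<lambda>k. 0}"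
proof (intro equalityI subsetI)
  fix u :: "nat \<Rightarrow> 'f"
  assume "u \<in> lodd (heis 1 0)"
  then have "u k = 0" for k by (cases "k \<le> 2") (auto simp: heis_simps)
  then show "u \<in> {\<lambda>k. 0}" by auto
qed (simp add: heis_simps)

lemma center_quotient_filiform4_iso_heis_1_0:
  "lsa_iso (quotient filiform4 (center filiform4)) (heis 1 0 :: ('f::field, nat \<Rightarrow> 'f) lsa)"
proof -
  define g :: "(nat \<Rightarrow> 'f) \<Rightarrow> nat \<Rightarrow> 'f" where "g u = (\<lambda>k. if k < 3 then u k else 0)" for u
  have onto: "g ` lcarrier filiform4 = lcarrier (heis 1 0 :: ('f, nat \<Rightarrow> 'f) lsa)"
  proof (intro equalityI subsetI)
    fix v :: "nat \<Rightarrow> 'f"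
    assume "v \<in> lcarrier (heis 1 0)"
    then have "v = g v" "v \<in> lcarrier filiform4"
      by (auto simp: g_def heis_simps filiform4_simps fun_eq_iff)
    then show "v \<in> g ` lcarrier filiform4" by blast
  qed (auto simp: g_def heis_simps)
  have "is_lsa_iso (g \<circ> rep) (quotient filiform4 (center filiform4)) (heis 1 0)"
  proof (rule filiform4.is_lsa_iso_quotient_center)
    show "g ` leven filiform4 = leven (heis 1 0 :: ('f, nat \<Rightarrow> 'f) lsa)"
      using onto by (simp add: heis_simps filiform4_simps Suc_le_eq numeral_3_eq_3 numeral_2_eq_2)
    show "g ` lodd filiform4 = lodd (heis 1 0 :: ('f, nat \<Rightarrow> 'f) lsa)"
      unfolding heis_1_0_odd by (auto simp: g_def filiform4_simps)
    show "g x = g y \<longleftrightarrow> coset filiform4 (center filiform4) x = coset filiform4 (center filiform4) y"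
      if "x \<in> lcarrier filiform4" "y \<in> lcarrier filiform4" for x y
      using that filiform4_coset_eq_iff by (auto simp: g_def fun_eq_iff)
  qed (use onto in \<open>simp_all add: g_def fun_eq_iff heis_simps filiform4_simps\<close>)
  then show ?thesis by (auto simp: lsa_iso_iff)
qed

theorem mainTheorem3:
  fixes m n :: nat
  assumes char2: "(2::'f::field) \<noteq> 0"
    and char3: "(3::'f) \<noteq> 0"
    and mn: "m + n \<ge> 1"
  shows "(capable_in TYPE('b) (heis m n :: ('f, nat \<Rightarrow> 'f) lsa) \<longrightarrow> m = 1 \<and> n = 0) \<and>
         (m = 1 \<and> n = 0 \<longrightarrow> capable_in TYPE(nat \<Rightarrow> 'f) (heis m n :: ('f, nat \<Rightarrow> 'f) lsa))"
proof (rule conjI; rule impI)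
  assume "capable_in TYPE('b) (heis m n :: ('f, nat \<Rightarrow> 'f) lsa)"
  then obtain H :: "('f, 'b) lsa" and f
    where "lie_superalgebra H" "is_lsa_iso f (quotient H (center H)) (heis m n)"
    unfolding capable_in_def lsa_iso_iff by blast
  then interpret center_quotient_iso_heis H m n f
    by (intro center_quotient_iso_heis.intro lie_superalg.intro center_quotient_iso_heis_axioms.intro)
  show "m = 1 \<and> n = 0" using dimensions_eq_1_0 char3 mn by blast
    \<comment> \<open>only \<open>char3\<close> is needed\<close>
next
  assume "m = 1 \<and> n = 0"
  then show "capable_in TYPE(nat \<Rightarrow> 'f) (heis m n :: ('f, nat \<Rightarrow> 'f) lsa)"
    unfolding capable_in_def
    using filiform4_lie_superalgebra center_quotient_filiform4_iso_heis_1_0 by blast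
qed

end
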